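(* Let $p_s\in(0,1)$, $p_f=1-p_s$, and let $p_{-1},p_0,p_1\in[0,1]$ with $p_{-1}+p_0+p_1=1$. Let $(h(t))$ be i.i.d. with $\mathbb{P}[h(t)=1]=p_s$, $\mathbb{P}[h(t)=0]=p_f$, and let $(\delta(t))$ be i.i.d., independent of $(h(t))$, with $\mathbb{P}[\delta(t)=k]=p_k$ for $k\in\{-1,0,1\}$. Define the positive-integer-valued process $$\Delta(t)=\begin{cases}\max\{1,\delta(t)+1\}, & h(t)=1,\\ \max\{1,\ \Delta(t-1)+\delta(t)-\delta(t-1)+1\}, & h(t)=0.\end{cases}$$ Let $F=1-p_s(1-p_{-1})$. Then the stationary distribution $\pi_{k,i}=\lim_{t\to\infty}\mathbb{P}[\delta(t)=k,\Delta(t)=i]$, $k\in\{-1,0,1\}$, $i\ge1$, of the Markov chain $(\delta(t),\Delta(t))$ is $$\pi_{k,i}=\begin{cases} p_{-1}p_s\big(1+p_f(1-p_{-1})\big), & k=-1,\ i=1,\\ p_{-1}p_sp_f^{\,i-1}F, & k=-1,\ i\ge2,\\ p_kp_s, & k\in\{0,1\},\ i=k+1,\\ p_kp_sp_f(1-p_{-1}), & k\in\{0,1\},\ i=k+2,\\ p_kp_sp_f^{\,i-2-k}F, & k\in\{0,1\},\ i\ge k+3,\end{cases}$$ and $\pi_{k,i}=0$ for $k\in\{0,1\}$, $1\le i\le k$.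
   Context: Model: $h(t)=1$ means successful decoding at the receiver in slot $t$; $\delta(t)\in\{-1,0,1\}$ is the random clock drift (in slots) of the receiver's clock relative to the transmitter's clock in slot $t$; $\Delta(t)$ is the age of information at the receiver. *)

theory Defs
  imports "HOL-Probability.Probability"
begin

fun aoi :: "(nat \<Rightarrow> 'a \<Rightarrow> int) \<Rightarrow> (nat \<Rightarrow> 'a \<Rightarrow> int) \<Rightarrow> ('a \<Rightarrow> int) \<Rightarrow> nat \<Rightarrow> 'a \<Rightarrow> int" where
  "aoi h d D0 0 \<omega> = D0 \<omega>"
| "aoi h d D0 (Suc t) \<omega> =
     (if h (Suc t) \<omega> = 1 then max 1 (d (Suc t) \<omega> + 1)
      else max 1 (aoi h d D0 t \<omega> + d (Suc t) \<omega> - d t \<omega> + 1))"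

definition stat_pi :: "real \<Rightarrow> real \<Rightarrow> real \<Rightarrow> real \<Rightarrow> int \<Rightarrow> int \<Rightarrow> real" where
  "stat_pi ps pm1 p0 p1 k i =
     (let pf = 1 - ps; F = 1 - ps * (1 - pm1); pk = (if k = 0 then p0 else p1) in
      if k = -1 then
        (if i = 1 then pm1 * ps * (1 + pf * (1 - pm1))
         else pm1 * ps * pf ^ nat (i - 1) * F)
      else if i \<le> k then 0
      else if i = k + 1 then pk * ps
      else if i = k + 2 then pk * ps * pf * (1 - pm1)
      else pk * ps * pf ^ nat (i - 2 - k) * F)"

end

theory Submission
  imports Defs
begin

(* Condition on the last slot s \<le> t in which decoding succeeded. From then on the age grows by
   one per slot, corrected by the drift, so that \<Delta>(t) = \<delta>(t) + (t - s) + 1 + [\<delta>(s) = -1].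
   The event "last success m = t - s slots ago" has probability p_s p_f^m and is independent of the
   drifts, and for m > 0 the drifts \<delta>(s) and \<delta>(t) are independent of each other. Hence
   P[\<delta>(t) = k, \<Delta>(t) = i] is a finite sum over m, which is \<pi>_{k,i}, plus the probability of
   the event that no success occurred in slots 1..t, which is at most p_f^t and tends to 0. *)

lemma aoi_after_last_success:
  assumes "1 \<le> s" "s \<le> t" "h s \<omega> = 1" "\<forall>j\<in>{s<..t}. h j \<omega> \<noteq> 1"
    and "\<forall>j\<in>{s..t}. -1 \<le> d j \<omega>"
  shows "aoi h d D0 t \<omega> = d t \<omega> + int (t - s) + 1 + of_bool (d s \<omega> = -1)"
  using assms
proof (induction t)
  case 0
  then show ?case by simp
next
  case (Suc t)
  show ?case
  proof (cases "s = Suc t")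
    case True
    with Suc.prems show ?thesis
      by auto
  next
    case False
    with Suc.prems have "s \<le> t" "h (Suc t) \<omega> \<noteq> 1" "-1 \<le> d (Suc t) \<omega>"
      by auto
    moreover have "aoi h d D0 t \<omega> = d t \<omega> + int (t - s) + 1 + of_bool (d s \<omega> = -1)"
      using Suc.IH Suc.prems \<open>s \<le> t\<close> by auto
    ultimately show ?thesis
      by (auto simp: Suc_diff_le)
  qed
qed

lemma measurable_aoi [measurable]:
  assumes [measurable]: "\<And>t. h t \<in> M \<rightarrow>\<^sub>M count_space UNIV" "\<And>t. d t \<in> M \<rightarrow>\<^sub>M count_space UNIV"
    and [measurable]: "D0 \<in> M \<rightarrow>\<^sub>M count_space UNIV"
  shows "aoi h d D0 t \<in> M \<rightarrow>\<^sub>M count_space UNIV"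
proof (induction t)
  case 0
  then show ?case by simp
next
  case (Suc t)
  note [measurable] = Suc
  show ?case by simp measurable
qed

(* Conditional probability of \<Delta>(t) = i given \<delta>(t) = k and that the last success was m slots
   before t; for m = 0 the drifts \<delta>(s) and \<delta>(t) coincide. *)
definition aoi_gap_prob :: "real \<Rightarrow> int \<Rightarrow> int \<Rightarrow> nat \<Rightarrow> real" where
  "aoi_gap_prob pm1 k i m =
     (if m = 0 then of_bool (i = k + 1 + of_bool (k = -1))
      else if i = k + int m + 2 then pm1
      else if i = k + int m + 1 then 1 - pm1
      else 0)"

lemma aoi_gap_prob_eq_0: "i \<le> k + int m \<Longrightarrow> aoi_gap_prob pm1 k i m = 0"
  by (auto simp: aoi_gap_prob_def)

lemma sum_aoi_gap_prob:
  fixes f :: "nat \<Rightarrow> real"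
  shows "(\<Sum>m<nat (i - k). f m * aoi_gap_prob pm1 k i m) =
      of_bool (i = k + 1 + of_bool (k = -1)) * f 0
    + of_bool (k + 3 \<le> i) * f (nat (i - k - 2)) * pm1
    + of_bool (k + 2 \<le> i) * f (nat (i - k - 1)) * (1 - pm1)" (is "_ = ?R")
proof -
  let ?N = "{..<nat (i - k)}"
  have "(\<Sum>m\<in>?N. f m * aoi_gap_prob pm1 k i m) =
      (\<Sum>m\<in>?N. (if m = 0 then of_bool (i = k + 1 + of_bool (k = -1)) * f m else 0)
        + (if m = nat (i - k - 2) \<and> k + 3 \<le> i then f m * pm1 else 0)
        + (if m = nat (i - k - 1) \<and> k + 2 \<le> i then f m * (1 - pm1) else 0))"
    by (intro sum.cong) (auto simp: aoi_gap_prob_def)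
  also have "\<dots> = ?R"
    unfolding sum.distrib by simp
  finally show ?thesis .
qed

lemma stat_pi_eq_sum:
  assumes "k \<in> {-1, 0, 1}" "1 \<le> i"
  shows "stat_pi ps pm1 p0 p1 k i =
    (\<Sum>m<nat (i - k). ps * (1 - ps) ^ m * (if k = -1 then pm1 else if k = 0 then p0 else p1)
                       * aoi_gap_prob pm1 k i m)"
proof (cases "k = -1")
  case True
  show ?thesis
  proof (cases "i = 1")
    case False
    with assms have "nat i = Suc (nat (i - 1))" by auto
    with True False assms show ?thesis
      unfolding sum_aoi_gap_prob by (simp add: stat_pi_def Let_def algebra_simps)
  next
    case True
    with \<open>k = -1\<close> show ?thesis
      unfolding sum_aoi_gap_prob by (simp add: stat_pi_def algebra_simps)
  qed
next
  case False
  with assms(1) have "k = 0 \<or> k = 1" by auto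
  consider "i \<le> k" | "i = k + 1" | "i = k + 2" | "k + 3 \<le> i" by linarith
  then show ?thesis
  proof cases
    case 4
    then have "nat (i - k - 1) = Suc (nat (i - 2 - k))" by auto
    with 4 \<open>k = 0 \<or> k = 1\<close> show ?thesis
      unfolding sum_aoi_gap_prob by (auto simp: stat_pi_def Let_def algebra_simps)
  qed (use \<open>k = 0 \<or> k = 1\<close> in \<open>unfold sum_aoi_gap_prob, auto simp: stat_pi_def\<close>)
qed

lemma (in prob_space) prob_indep_vars_all:
  assumes "indep_vars N X I" "J \<subseteq> I" "finite J" "\<And>j. j \<in> J \<Longrightarrow> A j \<in> sets (N j)"
  shows "prob {\<omega> \<in> space M. \<forall>j\<in>J. X j \<omega> \<in> A j} = (\<Prod>j\<in>J. prob {\<omega> \<in> space M. X j \<omega> \<in> A j})"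
proof (cases "J = {}")
  case False
  have "{\<omega> \<in> space M. \<forall>j\<in>J. X j \<omega> \<in> A j} = (\<Inter>j\<in>J. X j -` A j \<inter> space M)"
    using False by auto
  moreover have "X j -` A j \<inter> space M = {\<omega> \<in> space M. X j \<omega> \<in> A j}" for j
    by auto
  ultimately show ?thesis
    using indep_varsD[OF assms(1) False assms(3,2,4)] by simp
qed (simp add: prob_space)

lemma (in prob_space) AE_all_in_finite_range:
  fixes X :: "'i :: countable \<Rightarrow> 'a \<Rightarrow> 'b"
  assumes [measurable]: "\<And>t. X t \<in> M \<rightarrow>\<^sub>M count_space UNIV"
    and "finite V" "\<And>t. (\<Sum>v\<in>V. prob {\<omega> \<in> space M. X t \<omega> = v}) = 1"
  shows "AE \<omega> in M. \<forall>t. X t \<omega> \<in> V"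
  unfolding AE_all_countable
proof
  fix t
  have events: "{\<omega> \<in> space M. X t \<omega> \<in> V} \<in> events"
    using measurable_sets[OF assms(1), of V t] by (simp add: vimage_def Int_def conj_commute)
  have "prob {\<omega> \<in> space M. X t \<omega> \<in> V} = prob (\<Union>v\<in>V. {\<omega> \<in> space M. X t \<omega> = v})"
    by (rule arg_cong[where f = prob]) auto
  also have "\<dots> = (\<Sum>v\<in>V. prob {\<omega> \<in> space M. X t \<omega> = v})"
    using \<open>finite V\<close> by (intro measure_finite_Union) (auto simp: disjoint_family_on_def)
  also have "\<dots> = 1"
    by (rule assms(3))
  finally show "AE \<omega> in M. X t \<omega> \<in> V"
    using prob_Collect_eq_1[OF events] by simp
qed

locale aoi_model = prob_space M
  for M :: "'a measure" and h \<delta> :: "nat \<Rightarrow> 'a \<Rightarrow> int" and ps pm1 :: real +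
  assumes indep_vars_success_drift:
      "indep_vars (\<lambda>_. count_space UNIV) (\<lambda>j. case j of Inl t \<Rightarrow> h t | Inr t \<Rightarrow> \<delta> t) UNIV"
    and prob_success: "prob {\<omega> \<in> space M. h t \<omega> = 1} = ps"
    and prob_drift_minus_one: "prob {\<omega> \<in> space M. \<delta> t \<omega> = -1} = pm1"
    and AE_drift_ge_minus_one: "AE \<omega> in M. \<forall>t. -1 \<le> \<delta> t \<omega>"
begin

lemma measurable_success_drift [measurable]:
  "h t \<in> M \<rightarrow>\<^sub>M count_space UNIV" "\<delta> t \<in> M \<rightarrow>\<^sub>M count_space UNIV"
proof -
  have "(case j of Inl t \<Rightarrow> h t | Inr t \<Rightarrow> \<delta> t) \<in> M \<rightarrow>\<^sub>M count_space UNIV" for j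
    using indep_vars_success_drift by (simp add: indep_vars_def2)
  from this[of "Inl t"] this[of "Inr t"]
  show "h t \<in> M \<rightarrow>\<^sub>M count_space UNIV" "\<delta> t \<in> M \<rightarrow>\<^sub>M count_space UNIV"
    by simp_all
qed

lemma prob_indep_success_drift:
  assumes "finite T" "finite U"
  shows "prob {\<omega> \<in> space M. (\<forall>j\<in>T. h j \<omega> \<in> A j) \<and> (\<forall>j\<in>U. \<delta> j \<omega> \<in> B j)} =
    (\<Prod>j\<in>T. prob {\<omega> \<in> space M. h j \<omega> \<in> A j}) * (\<Prod>j\<in>U. prob {\<omega> \<in> space M. \<delta> j \<omega> \<in> B j})"
proof -
  let ?X = "\<lambda>j. case j of Inl t \<Rightarrow> h t | Inr t \<Rightarrow> \<delta> t"
  let ?C = "case_sum A B"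
  have "{\<omega> \<in> space M. (\<forall>j\<in>T. h j \<omega> \<in> A j) \<and> (\<forall>j\<in>U. \<delta> j \<omega> \<in> B j)} =
      {\<omega> \<in> space M. \<forall>j\<in>Inl ` T \<union> Inr ` U. ?X j \<omega> \<in> ?C j}"
    by (simp add: ball_Un Ball_image_comp comp_def)
  also have "prob \<dots> = (\<Prod>j\<in>Inl ` T \<union> Inr ` U. prob {\<omega> \<in> space M. ?X j \<omega> \<in> ?C j})"
    using assms by (intro prob_indep_vars_all[OF indep_vars_success_drift]) auto
  also have "\<dots> = (\<Prod>j\<in>Inl ` T. prob {\<omega> \<in> space M. ?X j \<omega> \<in> ?C j}) *
      (\<Prod>j\<in>Inr ` U. prob {\<omega> \<in> space M. ?X j \<omega> \<in> ?C j})"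
    using assms by (intro prod.union_disjoint) auto
  finally show ?thesis
    by (simp add: prod.reindex)
qed

lemma prob_no_success_at: "prob {\<omega> \<in> space M. h t \<omega> \<noteq> 1} = 1 - ps"
proof -
  have "{\<omega> \<in> space M. h t \<omega> \<noteq> 1} = space M - {\<omega> \<in> space M. h t \<omega> = 1}"
    by auto
  then show ?thesis
    by (simp add: prob_compl prob_success)
qed

lemma prob_no_success: "prob {\<omega> \<in> space M. \<forall>j\<in>{1..t}. h j \<omega> \<noteq> 1} = (1 - ps) ^ t"
  using prob_indep_success_drift[of "{1..t}" "{}" "\<lambda>_. - {1}"]
  by (simp add: prob_no_success_at)

definition last_success :: "nat \<Rightarrow> nat \<Rightarrow> 'a set" where
  "last_success t s = {\<omega> \<in> space M. h s \<omega> = 1 \<and> (\<forall>j\<in>{s<..t}. h j \<omega> \<noteq> 1)}"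

lemma sets_last_success [measurable]: "last_success t s \<in> sets M"
  unfolding last_success_def by measurable

lemma prob_last_success_drift:
  assumes "s < t"
  shows "prob {\<omega> \<in> last_success t s. \<delta> t \<omega> \<in> B \<and> \<delta> s \<omega> \<in> C} =
    ps * (1 - ps) ^ (t - s) * prob {\<omega> \<in> space M. \<delta> t \<omega> \<in> B} * prob {\<omega> \<in> space M. \<delta> s \<omega> \<in> C}"
proof -
  let ?A = "\<lambda>j. if j = s then {1} else - {1}"
  let ?B = "\<lambda>j. if j = t then B else C"
  have "{\<omega> \<in> last_success t s. \<delta> t \<omega> \<in> B \<and> \<delta> s \<omega> \<in> C} =
      {\<omega> \<in> space M. (\<forall>j\<in>insert s {s<..t}. h j \<omega> \<in> ?A j) \<and> (\<forall>j\<in>{t, s}. \<delta> j \<omega> \<in> ?B j)}"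
    using assms by (auto simp: last_success_def)
  also have "prob \<dots> = (\<Prod>j\<in>insert s {s<..t}. prob {\<omega> \<in> space M. h j \<omega> \<in> ?A j}) *
      (\<Prod>j\<in>{t, s}. prob {\<omega> \<in> space M. \<delta> j \<omega> \<in> ?B j})"
    by (rule prob_indep_success_drift) auto
  finally show ?thesis
    using assms by (simp add: prob_success prob_no_success_at)
qed

lemma prob_last_success_now:
  "prob {\<omega> \<in> last_success t t. \<delta> t \<omega> \<in> B} = ps * prob {\<omega> \<in> space M. \<delta> t \<omega> \<in> B}"
  using prob_indep_success_drift[of "{t}" "{t}" "\<lambda>_. {1}" "\<lambda>_. B"]
  by (simp add: last_success_def prob_success)

lemma prob_drift_ne_minus_one: "prob {\<omega> \<in> space M. \<delta> t \<omega> \<noteq> -1} = 1 - pm1"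
proof -
  have "{\<omega> \<in> space M. \<delta> t \<omega> \<noteq> -1} = space M - {\<omega> \<in> space M. \<delta> t \<omega> = -1}"
    by auto
  then show ?thesis
    by (simp add: prob_compl prob_drift_minus_one)
qed

lemma prob_drift_gap:
  assumes "0 < m"
  shows "prob {\<omega> \<in> space M. \<delta> s \<omega> \<in> {d. i = k + int m + 1 + of_bool (d = -1)}} =
    aoi_gap_prob pm1 k i m"
proof -
  consider "i = k + int m + 2" | "i = k + int m + 1" | "i \<noteq> k + int m + 2" "i \<noteq> k + int m + 1"
    by blast
  then show ?thesis
  proof cases
    case 1
    then have "{d. i = k + int m + 1 + of_bool (d = -1)} = {-1}"
      by auto
    with 1 assms show ?thesis
      by (simp add: aoi_gap_prob_def prob_drift_minus_one)
  next
    case 2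
    then have "{d. i = k + int m + 1 + of_bool (d = -1)} = - {-1}"
      by auto
    with 2 assms show ?thesis
      by (simp add: aoi_gap_prob_def prob_drift_ne_minus_one)
  next
    case 3
    then have "{d. i = k + int m + 1 + of_bool (d = -1)} = {}"
      by auto
    with 3 assms show ?thesis
      by (simp add: aoi_gap_prob_def)
  qed
qed

lemma prob_aoi_last_success:
  assumes [measurable]: "D0 \<in> M \<rightarrow>\<^sub>M count_space UNIV" and "1 \<le> s" "s \<le> t"
  shows "prob {\<omega> \<in> last_success t s. \<delta> t \<omega> = k \<and> aoi h \<delta> D0 t \<omega> = i} =
    ps * (1 - ps) ^ (t - s) * prob {\<omega> \<in> space M. \<delta> t \<omega> = k} * aoi_gap_prob pm1 k i (t - s)"
proof -
  have "prob {\<omega> \<in> last_success t s. \<delta> t \<omega> = k \<and> aoi h \<delta> D0 t \<omega> = i} =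
      prob {\<omega> \<in> last_success t s. \<delta> t \<omega> = k \<and> i = k + int (t - s) + 1 + of_bool (\<delta> s \<omega> = -1)}"
  proof (rule measure_eq_AE)
    show "AE \<omega> in M. \<omega> \<in> {\<omega> \<in> last_success t s. \<delta> t \<omega> = k \<and> aoi h \<delta> D0 t \<omega> = i} \<longleftrightarrow>
        \<omega> \<in> {\<omega> \<in> last_success t s. \<delta> t \<omega> = k \<and> i = k + int (t - s) + 1 + of_bool (\<delta> s \<omega> = -1)}"
      using AE_drift_ge_minus_one
    proof eventually_elim
      case (elim \<omega>)
      then show ?case
        using aoi_after_last_success[OF assms(2,3), of h \<omega> \<delta> D0] by (auto simp: last_success_def)
    qed
  qed (auto simp: last_success_def)
  also have "\<dots> = ps * (1 - ps) ^ (t - s) * prob {\<omega> \<in> space M. \<delta> t \<omega> = k} * aoi_gap_prob pm1 k i (t - s)"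
  proof (cases "s = t")
    case True
    then have "{\<omega> \<in> last_success t s. \<delta> t \<omega> = k \<and> i = k + int (t - s) + 1 + of_bool (\<delta> s \<omega> = -1)} =
        {\<omega> \<in> last_success t t. \<delta> t \<omega> \<in> (if i = k + 1 + of_bool (k = -1) then {k} else {})}"
      by auto
    with True show ?thesis
      by (simp add: prob_last_success_now aoi_gap_prob_def)
  next
    case False
    with assms have "s < t" by simp
    then show ?thesis
      using prob_last_success_drift[of s t "{k}" "{d. i = k + int (t - s) + 1 + of_bool (d = -1)}"]
        prob_drift_gap[of "t - s" s i k]
      by simp
  qed
  finally show ?thesis .
qed

lemma prob_split_last_success:
  assumes [measurable]: "E \<in> sets M"
  shows "prob E = (\<Sum>s\<in>{1..t}. prob (E \<inter> last_success t s))
    + prob (E \<inter> {\<omega> \<in> space M. \<forall>j\<in>{1..t}. h j \<omega> \<noteq> 1})"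
proof -
  let ?N = "{\<omega> \<in> space M. \<forall>j\<in>{1..t}. h j \<omega> \<noteq> 1}"
  have "E \<subseteq> (\<Union>s\<in>{1..t}. last_success t s) \<union> ?N"
  proof
    fix \<omega> assume "\<omega> \<in> E"
    show "\<omega> \<in> (\<Union>s\<in>{1..t}. last_success t s) \<union> ?N"
    proof (cases "\<omega> \<in> ?N")
      case False
      let ?S = "{j \<in> {1..t}. h j \<omega> = 1}"
      have "\<omega> \<in> space M"
        using \<open>\<omega> \<in> E\<close> sets.sets_into_space[OF assms] by blast
      with False have "?S \<noteq> {}"
        by auto
      then have "Max ?S \<in> ?S"
        by (intro Max_in) auto
      moreover have "\<forall>j\<in>{Max ?S<..t}. h j \<omega> \<noteq> 1"
      proof (intro ballI notI)
        fix j assume "j \<in> {Max ?S<..t}" "h j \<omega> = 1"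
        with \<open>Max ?S \<in> ?S\<close> have "j \<in> ?S"
          by auto
        then have "j \<le> Max ?S"
          by (intro Max_ge) auto
        with \<open>j \<in> {Max ?S<..t}\<close> show False
          by simp
      qed
      ultimately have "Max ?S \<in> {1..t}" "\<omega> \<in> last_success t (Max ?S)"
        using \<open>\<omega> \<in> space M\<close> unfolding last_success_def by blast+
      then show ?thesis
        by blast
    qed simp
  qed
  then have "prob E = prob ((\<Union>s\<in>{1..t}. E \<inter> last_success t s) \<union> (E \<inter> ?N))"
    by (intro arg_cong[where f = prob]) blast
  also have "\<dots> = prob (\<Union>s\<in>{1..t}. E \<inter> last_success t s) + prob (E \<inter> ?N)"
    by (intro finite_measure_Union) (auto simp: last_success_def)
  also have "prob (\<Union>s\<in>{1..t}. E \<inter> last_success t s) = (\<Sum>s\<in>{1..t}. prob (E \<inter> last_success t s))"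
  proof (intro measure_finite_Union)
    show "disjoint_family_on (\<lambda>s. E \<inter> last_success t s) {1..t}"
      by (auto simp: disjoint_family_on_def last_success_def)
  qed auto
  finally show ?thesis .
qed

lemma tendsto_prob_aoi:
  assumes [measurable]: "D0 \<in> M \<rightarrow>\<^sub>M count_space UNIV" and "0 < ps"
    and prob_drift: "\<And>t. prob {\<omega> \<in> space M. \<delta> t \<omega> = k} = pk"
  shows "(\<lambda>t. prob {\<omega> \<in> space M. \<delta> t \<omega> = k \<and> aoi h \<delta> D0 t \<omega> = i}) \<longlonglongrightarrow>
    (\<Sum>m<nat (i - k). ps * (1 - ps) ^ m * pk * aoi_gap_prob pm1 k i m)"
    (is "(\<lambda>t. prob (?E t)) \<longlonglongrightarrow> ?L")
proof -
  let ?N = "\<lambda>t. {\<omega> \<in> space M. \<forall>j\<in>{1..t}. h j \<omega> \<noteq> 1}"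
  have prob_split: "prob (?E t) = ?L + prob (?E t \<inter> ?N t)" if "nat (i - k) \<le> t" for t
  proof -
    have "?E t \<inter> last_success t s = {\<omega> \<in> last_success t s. \<delta> t \<omega> = k \<and> aoi h \<delta> D0 t \<omega> = i}" for s
      by (auto simp: last_success_def)
    then have "(\<Sum>s\<in>{1..t}. prob (?E t \<inter> last_success t s)) =
        (\<Sum>s\<in>{1..t}. ps * (1 - ps) ^ (t - s) * pk * aoi_gap_prob pm1 k i (t - s))"
      by (simp add: prob_aoi_last_success prob_drift)
    also have "\<dots> = (\<Sum>m<t. ps * (1 - ps) ^ m * pk * aoi_gap_prob pm1 k i m)"
      by (rule sum.reindex_bij_witness[of _ "\<lambda>m. t - m" "\<lambda>s. t - s"]) auto
    also have "\<dots> = ?L"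
      using that by (intro sum.mono_neutral_right) (auto simp: aoi_gap_prob_eq_0)
    finally show ?thesis
      using prob_split_last_success[of "?E t" t] by simp
  qed
  have "ps \<le> 1"
    using prob_success[of 0] by (metis prob_le_1)
  have "(\<lambda>t. prob (?E t \<inter> ?N t)) \<longlonglongrightarrow> 0"
  proof (rule tendsto_sandwich[OF _ _ tendsto_const])
    show "\<forall>\<^sub>F t in sequentially. prob (?E t \<inter> ?N t) \<le> (1 - ps) ^ t"
      by (intro always_eventually allI) (auto simp flip: prob_no_success intro!: finite_measure_mono)
    show "(\<lambda>t. (1 - ps) ^ t) \<longlonglongrightarrow> 0"
      using \<open>0 < ps\<close> \<open>ps \<le> 1\<close> by (intro LIMSEQ_power_zero) auto
  qed simp
  then have "(\<lambda>t. ?L + prob (?E t \<inter> ?N t)) \<longlonglongrightarrow> ?L"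
    using tendsto_add[OF tendsto_const] by fastforce
  moreover have "\<forall>\<^sub>F t in sequentially. ?L + prob (?E t \<inter> ?N t) = prob (?E t)"
    using prob_split by (intro eventually_sequentiallyI[of "nat (i - k)"]) simp
  ultimately show ?thesis
    by (rule Lim_transform_eventually)
qed

end

theorem lemma3:
  fixes M :: "'a measure" and h \<delta> :: "nat \<Rightarrow> 'a \<Rightarrow> int" and D0 :: "'a \<Rightarrow> int"
    and ps pm1 p0 p1 :: real
  assumes "prob_space M"
    and "0 < ps" "ps < 1"
    and "0 \<le> pm1" "pm1 \<le> 1" "0 \<le> p0" "p0 \<le> 1" "0 \<le> p1" "p1 \<le> 1"
    and "pm1 + p0 + p1 = 1"
    and "prob_space.indep_vars M (\<lambda>_. count_space UNIV)
           (\<lambda>j. case j of Inl t \<Rightarrow> h t | Inr t \<Rightarrow> \<delta> t) (UNIV :: (nat + nat) set)"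
    and "\<And>t. measure M {\<omega> \<in> space M. h t \<omega> = 1} = ps"
    and "\<And>t. measure M {\<omega> \<in> space M. h t \<omega> = 0} = 1 - ps"
    and "\<And>t. measure M {\<omega> \<in> space M. \<delta> t \<omega> = -1} = pm1"
    and "\<And>t. measure M {\<omega> \<in> space M. \<delta> t \<omega> = 0} = p0"
    and "\<And>t. measure M {\<omega> \<in> space M. \<delta> t \<omega> = 1} = p1"
    and "D0 \<in> measurable M (count_space UNIV)"
    and "\<And>\<omega>. \<omega> \<in> space M \<Longrightarrow> D0 \<omega> \<ge> 1"
    and "k \<in> {-1, 0, 1}" and "i \<ge> 1"
  shows "(\<lambda>t. measure M {\<omega> \<in> space M. \<delta> t \<omega> = k \<and> aoi h \<delta> D0 t \<omega> = i})
           \<longlonglongrightarrow> stat_pi ps pm1 p0 p1 k i"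
proof -
  interpret prob_space M
    by fact
  have "\<delta> t \<in> M \<rightarrow>\<^sub>M count_space UNIV" for t
    using assms(11) unfolding indep_vars_def2 by (metis UNIV_I sum.case(2))
  then have "AE \<omega> in M. \<forall>t. \<delta> t \<omega> \<in> {-1, 0, 1}"
    by (rule AE_all_in_finite_range) (use assms(10,14-16) in auto)
  then have "AE \<omega> in M. \<forall>t. -1 \<le> \<delta> t \<omega>"
    by (rule eventually_mono) (smt (verit) insert_iff empty_iff)
  then interpret aoi_model M h \<delta> ps pm1
    using assms(11,12,14) by unfold_locales
  have "prob {\<omega> \<in> space M. \<delta> t \<omega> = k} = (if k = -1 then pm1 else if k = 0 then p0 else p1)" for t
    using assms(14-16,19) by auto
  with assms(2,17) have "(\<lambda>t. prob {\<omega> \<in> space M. \<delta> t \<omega> = k \<and> aoi h \<delta> D0 t \<omega> = i}) \<longlonglongrightarrow>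
      (\<Sum>m<nat (i - k). ps * (1 - ps) ^ m * (if k = -1 then pm1 else if k = 0 then p0 else p1)
                        * aoi_gap_prob pm1 k i m)"
    by (intro tendsto_prob_aoi)
  then show ?thesis
    by (simp only: stat_pi_eq_sum[OF assms(19,20)])
qed

end
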